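(* Let $S$ be an intra-regular semigroup. Then Green's relation $\mathcal{J}$ equals the relation $\mathcal{I}$ on $S$.
   Context: A semigroup $S$ is intra-regular if $a\in Sa^{2}S$ for every $a\in S$. For $a\in S$, $I(a)=\{a\}\cup Sa\cup aS\cup SaS$ and $\mathrm{IN}(a)=\{a\}\cup\{a^{2}\}\cup SaS$. $a\,\mathcal{J}\,b$ iff $I(a)=I(b)$, and $a\,\mathcal{I}\,b$ iff $\mathrm{IN}(a)=\mathrm{IN}(b)$. *)

theory Defs
  imports Main
begin

text \<open>The semigroup S is the whole carrier of a type of class semigroup_mult.\<close>

definition intra_regular :: "'a::semigroup_mult itself \<Rightarrow> bool" where
  "intra_regular _ \<longleftrightarrow> (\<forall>a::'a. \<exists>x y. a = x * (a * a) * y)"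

definition ideal_gen :: "'a::semigroup_mult \<Rightarrow> 'a set" where
  "ideal_gen a = {a} \<union> {s * a | s. True} \<union> {a * s | s. True} \<union> {s * a * t | s t. True}"

definition IN_gen :: "'a::semigroup_mult \<Rightarrow> 'a set" where
  "IN_gen a = {a} \<union> {a * a} \<union> {s * a * t | s t. True}"

definition greenJ :: "'a::semigroup_mult rel" where
  "greenJ = {(a, b). ideal_gen a = ideal_gen b}"

definition relI :: "'a::semigroup_mult rel" where
  "relI = {(a, b). IN_gen a = IN_gen b}"

end

theory Submission
  imports Defs
begin

(* In an intra-regular semigroup every element a lies in SaS, since a = x a a y = (x a) a y.
   Once a = u a v, the set SaS absorbs the extra generators of I(a) and IN(a):
   s a = (s u) a v, a s = u a (v s) and a a = u a (v a). So I(a) = SaS = IN(a). *)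

lemma intra_regular_mem_SaS:
  assumes "intra_regular TYPE('a::semigroup_mult)"
  shows "(a::'a) \<in> {s * a * t | s t. True}"
proof -
  obtain x y where "a = x * (a * a) * y"
    using assms unfolding intra_regular_def by blast
  then have "a = (x * a) * a * y"
    by (simp add: mult.assoc)
  then show ?thesis by blast
qed

lemma ideal_gen_eq_SaS:
  fixes a :: "'a::semigroup_mult"
  assumes "a \<in> {s * a * t | s t. True}"
  shows "ideal_gen a = {s * a * t | s t. True}"
proof -
  from assms obtain u v where a: "a = u * a * v" by blast
  have "s * a = (s * u) * a * v" for s
    by (subst a) (simp add: mult.assoc)
  moreover have "a * s = u * a * (v * s)" for s
    by (subst a) (simp add: mult.assoc)
  ultimately show ?thesis
    using assms unfolding ideal_gen_def by blast
qed

lemma IN_gen_eq_SaS: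
  fixes a :: "'a::semigroup_mult"
  assumes "a \<in> {s * a * t | s t. True}"
  shows "IN_gen a = {s * a * t | s t. True}"
proof -
  from assms obtain u v where a: "a = u * a * v" by blast
  have "a * a = u * a * (v * a)"
    by (subst a) (simp add: mult.assoc)
  then show ?thesis
    using assms unfolding IN_gen_def by blast
qed

theorem mainTheorem19:
  assumes "intra_regular TYPE('a::semigroup_mult)"
  shows "(greenJ :: 'a rel) = relI"
proof -
  have "ideal_gen a = IN_gen a" for a :: 'a
    using intra_regular_mem_SaS[OF assms] ideal_gen_eq_SaS IN_gen_eq_SaS by metis
  then show ?thesis
    unfolding greenJ_def relI_def by simp
qed

end
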